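(* There is a constant $c>0$ such that for every $n\in\mathbb{N}$ that is a multiple of $7$, $\mathrm{fw}(\mathrm{HWB}_n)\ge 2^{cn}$. In particular, every TDD computing $\mathrm{HWB}_n$ has size at least $2^{cn}$.
   Context: $\mathrm{HWB}_n$ is the Boolean function over $x_1,\dots,x_n$ with $\mathrm{HWB}_n(x_1,\dots,x_n)=1$ iff $x_S=1$ where $S=\sum_{i=1}^n x_i$ (when $S=0$ the value is $0$). A vtree over $X$ is a rooted tree whose internal nodes have exactly two ordered children and whose leaves are labeled bijectively by $X$; $X_t$ is the set of variables below node $t$. For a Boolean function $f$ over $X$, $Y\subseteq X$ and $\tau\in 2^Y$, $f[\tau]$ is the function over $X\setminus Y$ mapping $\sigma$ to $f(\sigma\times\tau)$; $S_t$ is the number of distinct non-trivial (having a model) functions $f[\tau]$ with $\tau\in 2^{X_t}$; $\mathrm{fw}(f)[T]=\max_t S_t$ and $\mathrm{fw}(f)=\min_T \mathrm{fw}(f)[T]$ over all vtrees $T$ over $X$. An nTDD $C=(N,E)$ respecting $T$ has nodes $N=\biguplus_t N_t$ ($t$-nodes); leaf $t$-nodes (leaf labeled $x$) carry a label in $\{x,\neg x,1,0\}$ and compute that literal/constant; an internal $t$-node $g$ with children $t_1,t_2$ has inputs $E(g)\subseteq N_{t_1}\times N_{t_2}$ and computes $f_g=\bigvee_{(g_1,g_2)\in E(g)}(f_{g_1}\wedge f_{g_2})$ over $X_t$; the root-node $\mathrm{out}$ gives the computed function. Size $|C|=\sum_g|E(g)|$. A TDD is an nTDD (respecting some vtree)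 such that for every leaf $t$ labeled $x$, $N_t$ has at most one node labeled $x$, at most one labeled $\neg x$, at most one labeled $1$, and if one is labeled $1$ all others are labeled $0$; and for every internal $t$, distinct $t$-nodes have disjoint input sets. *)

theory Defs
  imports Complex_Main
begin

text \<open>An assignment to a variable set V is a total map that is False outside V
  (canonical representative of an element of 2^V). A Boolean function over X is
  a predicate on assignments, only ever evaluated on assignments to X.\<close>

definition asg :: "'v set \<Rightarrow> ('v \<Rightarrow> bool) set" where
  "asg V = {a. \<forall>v. v \<notin> V \<longrightarrow> a v = False}"

definition merge :: "'v set \<Rightarrow> ('v \<Rightarrow> bool) \<Rightarrow> ('v \<Rightarrow> bool) \<Rightarrow> ('v \<Rightarrow> bool)" where
  "merge Y \<sigma> \<tau> = (\<lambda>v. if v \<in> Y then \<tau> v else \<sigma> v)"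

definition subfun :: "(('v \<Rightarrow> bool) \<Rightarrow> bool) \<Rightarrow> 'v set \<Rightarrow> 'v set \<Rightarrow> ('v \<Rightarrow> bool)
     \<Rightarrow> (('v \<Rightarrow> bool) \<Rightarrow> bool)" where
  "subfun f X Y \<tau> = (\<lambda>\<sigma>. \<sigma> \<in> asg (X - Y) \<and> f (merge Y \<sigma> \<tau>))"

definition nontrivial_subfuns :: "(('v \<Rightarrow> bool) \<Rightarrow> bool) \<Rightarrow> 'v set \<Rightarrow> 'v set
     \<Rightarrow> (('v \<Rightarrow> bool) \<Rightarrow> bool) set" where
  "nontrivial_subfuns f X Y =
     {subfun f X Y \<tau> | \<tau>. \<tau> \<in> asg Y \<and> (\<exists>\<sigma>\<in>asg (X - Y). f (merge Y \<sigma> \<tau>))}"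

datatype 'v vtree = Leaf 'v | Node "'v vtree" "'v vtree"

primrec vars :: "'v vtree \<Rightarrow> 'v set" where
  "vars (Leaf x) = {x}"
| "vars (Node l r) = vars l \<union> vars r"

primrec distinct_leaves :: "'v vtree \<Rightarrow> bool" where
  "distinct_leaves (Leaf x) = True"
| "distinct_leaves (Node l r) =
     (distinct_leaves l \<and> distinct_leaves r \<and> vars l \<inter> vars r = {})"

text \<open>Nodes of a vtree, identified with the subtrees rooted at them
  (distinct for vtrees with bijectively labelled leaves).\<close>
primrec subtrees :: "'v vtree \<Rightarrow> 'v vtree set" where
  "subtrees (Leaf x) = {Leaf x}"
| "subtrees (Node l r) = insert (Node l r) (subtrees l \<union> subtrees r)"

definition vtree_over :: "'v vtree \<Rightarrow> 'v set \<Rightarrow> bool" where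
  "vtree_over T X \<longleftrightarrow> vars T = X \<and> distinct_leaves T"

definition S_t :: "(('v \<Rightarrow> bool) \<Rightarrow> bool) \<Rightarrow> 'v set \<Rightarrow> 'v vtree \<Rightarrow> nat" where
  "S_t f X t = card (nontrivial_subfuns f X (vars t))"

definition fw_T :: "(('v \<Rightarrow> bool) \<Rightarrow> bool) \<Rightarrow> 'v set \<Rightarrow> 'v vtree \<Rightarrow> nat" where
  "fw_T f X T = Max ((\<lambda>t. S_t f X t) ` subtrees T)"

definition fw :: "(('v \<Rightarrow> bool) \<Rightarrow> bool) \<Rightarrow> 'v set \<Rightarrow> nat" where
  "fw f X = (INF T \<in> {T. vtree_over T X}. fw_T f X T)"

definition HWB :: "nat \<Rightarrow> (nat \<Rightarrow> bool) \<Rightarrow> bool" where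
  "HWB n a = (let S = card {i \<in> {1..n}. a i} in 0 < S \<and> a S)"

datatype lbl = LPos | LNeg | LOne | LZero

text \<open>Nodes are of type 'g; tnode g is the vtree node t with g a t-node; lab is the
  label of leaf t-nodes (ignored for internal ones); inp g = E(g).\<close>
record ('v, 'g) ntdd =
  nodes :: "'g set"
  tnode :: "'g \<Rightarrow> 'v vtree"
  lab :: "'g \<Rightarrow> lbl"
  inp :: "'g \<Rightarrow> ('g \<times> 'g) set"
  out :: 'g

definition tnodes :: "('v, 'g) ntdd \<Rightarrow> 'v vtree \<Rightarrow> 'g set" where
  "tnodes C t = {g \<in> nodes C. tnode C g = t}"

definition is_nTDD :: "'v vtree \<Rightarrow> ('v, 'g) ntdd \<Rightarrow> bool" where
  "is_nTDD T C \<longleftrightarrow>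
     finite (nodes C) \<and>
     (\<forall>g \<in> nodes C. tnode C g \<in> subtrees T) \<and>
     (\<forall>g \<in> nodes C. \<forall>x. tnode C g = Leaf x \<longrightarrow> inp C g = {}) \<and>
     (\<forall>g \<in> nodes C. \<forall>t1 t2. tnode C g = Node t1 t2 \<longrightarrow>
         inp C g \<subseteq> tnodes C t1 \<times> tnodes C t2) \<and>
     out C \<in> nodes C \<and> tnode C (out C) = T"

definition is_TDD :: "'v vtree \<Rightarrow> ('v, 'g) ntdd \<Rightarrow> bool" where
  "is_TDD T C \<longleftrightarrow> is_nTDD T C \<and>
     (\<forall>x. Leaf x \<in> subtrees T \<longrightarrow>
        card {g \<in> tnodes C (Leaf x). lab C g = LPos} \<le> 1 \<and>
        card {g \<in> tnodes C (Leaf x). lab C g = LNeg} \<le> 1 \<and>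
        card {g \<in> tnodes C (Leaf x). lab C g = LOne} \<le> 1 \<and>
        ((\<exists>g \<in> tnodes C (Leaf x). lab C g = LOne) \<longrightarrow>
           (\<forall>g \<in> tnodes C (Leaf x). lab C g \<noteq> LOne \<longrightarrow> lab C g = LZero))) \<and>
     (\<forall>t1 t2. Node t1 t2 \<in> subtrees T \<longrightarrow>
        (\<forall>g1 \<in> tnodes C (Node t1 t2). \<forall>g2 \<in> tnodes C (Node t1 t2).
           g1 \<noteq> g2 \<longrightarrow> inp C g1 \<inter> inp C g2 = {}))"

primrec eval :: "'v vtree \<Rightarrow> ('v, 'g) ntdd \<Rightarrow> 'g \<Rightarrow> ('v \<Rightarrow> bool) \<Rightarrow> bool" where
  "eval (Leaf x) C g a =
     (case lab C g of LPos \<Rightarrow> a x | LNeg \<Rightarrow> \<not> a x | LOne \<Rightarrow> True | LZero \<Rightarrow> False)"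
| "eval (Node l r) C g a =
     (\<exists>(g1, g2) \<in> inp C g. eval l C g1 a \<and> eval r C g2 a)"

definition computes :: "'v vtree \<Rightarrow> ('v, 'g) ntdd \<Rightarrow> (('v \<Rightarrow> bool) \<Rightarrow> bool) \<Rightarrow> 'v set \<Rightarrow> bool" where
  "computes T C f X \<longleftrightarrow> (\<forall>a \<in> asg X. eval T C (out C) a = f a)"

definition tdd_size :: "('v, 'g) ntdd \<Rightarrow> nat" where
  "tdd_size C = (\<Sum>g \<in> nodes C. card (inp C g))"

end

theory Submission
  imports Defs
begin

(* Fix an internal vtree node t of a TDD computing f. Determinism means that any
   assignment tau to X_t is accepted by at most one t-node, and the root, hence f,
   sees tau only through the t-nodes; so the non-trivial subfunction f[tau] is
   determined by the t-node accepting tau, and S_t is at most the number of t-nodes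
   with an input, which is at most the size of the TDD.

   For HWB_n, let d = (n + 9) div 16 (positive as n >= 7). Every vtree has a node t
   with 6d - 2 <= |X_t| <= 12d - 6. Some window [k, k + |X - X_t|] contains 2d
   variables R of X_t; give tau weight k by setting k - d variables of X_t - R and
   exactly d variables of R. Setting p - k variables outside X_t makes the total
   weight p, so for p in R the subfunction reads off whether tau sets x_p. The
   (2d choose d) >= 2^d choices of the d variables thus give distinct non-trivial
   subfunctions. *)

lemma finite_vars [simp]: "finite (vars t)"
  by (induct t) auto

lemma subtrees_self [simp]: "t \<in> subtrees t"
  by (cases t) auto

lemma finite_subtrees: "finite (subtrees t)"
  by (induct t) auto

lemma subtrees_trans: "s \<in> subtrees t \<Longrightarrow> subtrees s \<subseteq> subtrees t"
  by (induct t) auto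

lemma vars_subtree: "s \<in> subtrees t \<Longrightarrow> vars s \<subseteq> vars t"
  by (induct t) auto

lemma card_vars_Node:
  "distinct_leaves (Node l r) \<Longrightarrow> card (vars (Node l r)) = card (vars l) + card (vars r)"
  by (simp add: card_Un_disjoint)

lemma vtree_over_exists:
  assumes "finite X" "X \<noteq> {}"
  shows "\<exists>T. vtree_over T X"
  using assms
proof (induction X rule: finite_ne_induct)
  case (singleton x)
  have "vtree_over (Leaf x) {x}" by (simp add: vtree_over_def)
  then show ?case ..
next
  case (insert x X)
  then obtain T where "vtree_over T X" by blast
  with insert.hyps have "vtree_over (Node (Leaf x) T) (insert x X)"
    by (auto simp: vtree_over_def)
  then show ?case ..
qed

lemma subtree_card_between:
  assumes "distinct_leaves t" "2 \<le> a" "a \<le> card (vars t)"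
  shows "\<exists>s\<in>subtrees t. a \<le> card (vars s) \<and> card (vars s) + 2 \<le> 2 * a"
  using assms
proof (induction t)
  case (Leaf x)
  then show ?case by simp
next
  case (Node l r)
  show ?case
  proof (cases "card (vars (Node l r)) + 2 \<le> 2 * a")
    case True
    with Node.prems show ?thesis by auto
  next
    case False
    with Node.prems have "a \<le> card (vars l) \<or> a \<le> card (vars r)"
      using card_vars_Node[of l r] by linarith
    with Node show ?thesis by auto
  qed
qed

lemma merge_in_asg: "Y \<subseteq> X \<Longrightarrow> \<sigma> \<in> asg (X - Y) \<Longrightarrow> merge Y \<sigma> \<tau> \<in> asg X"
  by (auto simp: asg_def merge_def)

lemma finite_asg: "finite Y \<Longrightarrow> finite (asg Y)"
proof -
  assume "finite Y"
  have "asg Y \<subseteq> (\<lambda>S v. v \<in> S) ` Pow Y"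
  proof
    fix a assume "a \<in> asg Y"
    then have "a = (\<lambda>v. v \<in> {v \<in> Y. a v})" by (auto simp: asg_def)
    then show "a \<in> (\<lambda>S v. v \<in> S) ` Pow Y" by blast
  qed
  with \<open>finite Y\<close> show ?thesis by (meson finite_Pow_iff finite_imageI finite_subset)
qed

lemma finite_nontrivial_subfuns: "finite Y \<Longrightarrow> finite (nontrivial_subfuns f X Y)"
proof -
  assume "finite Y"
  have "nontrivial_subfuns f X Y \<subseteq> subfun f X Y ` asg Y"
    unfolding nontrivial_subfuns_def by auto
  with \<open>finite Y\<close> show ?thesis by (meson finite_asg finite_imageI finite_subset)
qed

lemma eval_cong:
  "(\<And>v. v \<in> vars s \<Longrightarrow> a v = b v) \<Longrightarrow> eval s C g a = eval s C g b"
proof (induction s arbitrary: g)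
  case (Leaf x)
  then show ?case by (simp split: lbl.split)
next
  case (Node l r)
  then have "eval l C g1 a = eval l C g1 b" "eval r C g2 a = eval r C g2 b" for g1 g2
    by auto
  then show ?case by simp
qed

lemma nTDD_inp_Node:
  "is_nTDD T C \<Longrightarrow> g \<in> nodes C \<Longrightarrow> tnode C g = Node l r \<Longrightarrow> inp C g \<subseteq> tnodes C l \<times> tnodes C r"
  unfolding is_nTDD_def by blast

lemma nTDD_finite_inp:
  assumes "is_nTDD T C" "g \<in> nodes C"
  shows "finite (inp C g)"
proof (cases "tnode C g")
  case (Leaf x)
  with assms show ?thesis unfolding is_nTDD_def by auto
next
  case (Node l r)
  have "finite (tnodes C l \<times> tnodes C r)"
    using assms(1) unfolding is_nTDD_def tnodes_def by auto
  with nTDD_inp_Node[OF assms Node] show ?thesis by (rule finite_subset)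
qed

lemma eval_reaches_subtree:
  assumes "is_nTDD T C" "h \<in> nodes C" "tnode C h = s" "t \<in> subtrees s" "eval s C h a"
  shows "\<exists>g\<in>tnodes C t. eval t C g a"
  using assms(2-)
proof (induction s arbitrary: h)
  case (Leaf x)
  then show ?case by (auto simp: tnodes_def)
next
  case (Node l r)
  show ?case
  proof (cases "t = Node l r")
    case True
    with Node.prems show ?thesis by (auto simp: tnodes_def)
  next
    case False
    from Node.prems obtain g1 g2 where g: "(g1, g2) \<in> inp C h" "eval l C g1 a" "eval r C g2 a"
      by auto
    with nTDD_inp_Node[OF assms(1) Node.prems(1,2)] have "g1 \<in> tnodes C l" "g2 \<in> tnodes C r"
      by auto
    with Node False g show ?thesis by (auto simp: tnodes_def)
  qed
qed

lemma eval_cong_subtree: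
  assumes nTDD: "is_nTDD T C"
    and outside: "\<And>v. v \<notin> vars t \<Longrightarrow> a v = b v"
    and tnodes_agree: "\<And>g. g \<in> tnodes C t \<Longrightarrow> eval t C g a = eval t C g b"
  shows "distinct_leaves s \<Longrightarrow> t \<in> subtrees s \<Longrightarrow> h \<in> nodes C \<Longrightarrow> tnode C h = s
    \<Longrightarrow> eval s C h a = eval s C h b"
proof (induction s arbitrary: h)
  case (Leaf x)
  with tnodes_agree show ?case by (auto simp: tnodes_def)
next
  case (Node l r)
  show ?case
  proof (cases "t = Node l r")
    case True
    with Node.prems tnodes_agree show ?thesis by (auto simp: tnodes_def)
  next
    case False
    have side: "eval s' C g a = eval s' C g b" if "vars s' \<inter> vars t = {}" for s' g
      using that outside by (intro eval_cong) auto
    have "t \<in> subtrees l \<and> vars r \<inter> vars t = {} \<or> t \<in> subtrees r \<and> vars l \<inter> vars t = {}"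
      using Node.prems False vars_subtree[of t l] vars_subtree[of t r] by auto
    then have "\<forall>g\<in>tnodes C l. eval l C g a = eval l C g b"
      and "\<forall>g\<in>tnodes C r. eval r C g a = eval r C g b"
      using Node side by (auto simp: tnodes_def)
    with nTDD_inp_Node[OF nTDD Node.prems(3,4)] show ?thesis
      by (fastforce simp: Bex_def)
  qed
qed

lemma TDD_eval_unique:
  assumes TDD: "is_TDD T C"
  shows "s \<in> subtrees T \<Longrightarrow> g1 \<in> tnodes C s \<Longrightarrow> g2 \<in> tnodes C s
    \<Longrightarrow> eval s C g1 a \<Longrightarrow> eval s C g2 a \<Longrightarrow> g1 = g2"
proof (induction s arbitrary: g1 g2)
  case (Leaf x)
  have fin: "finite (tnodes C (Leaf x))"
    using TDD unfolding is_TDD_def is_nTDD_def tnodes_def by auto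
  have unique: "g1 = g2" if "card {g \<in> tnodes C (Leaf x). lab C g = l} \<le> 1"
    "lab C g1 = l" "lab C g2 = l" for l
    using that Leaf.prems fin card_le_Suc0_iff_eq[of "{g \<in> tnodes C (Leaf x). lab C g = l}"]
    by auto
  from TDD Leaf.prems(1) have
      "card {g \<in> tnodes C (Leaf x). lab C g = LPos} \<le> 1"
      "card {g \<in> tnodes C (Leaf x). lab C g = LNeg} \<le> 1"
      "card {g \<in> tnodes C (Leaf x). lab C g = LOne} \<le> 1"
      "(\<exists>g\<in>tnodes C (Leaf x). lab C g = LOne) \<longrightarrow>
         (\<forall>g\<in>tnodes C (Leaf x). lab C g \<noteq> LOne \<longrightarrow> lab C g = LZero)"
    unfolding is_TDD_def by blast+
  with Leaf.prems unique show ?case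
    by (cases "lab C g1"; cases "lab C g2"; auto)
next
  case (Node l r)
  from Node.prems obtain p1 p2 where p: "(p1, p2) \<in> inp C g1" "eval l C p1 a" "eval r C p2 a"
    by auto
  from Node.prems obtain q1 q2 where q: "(q1, q2) \<in> inp C g2" "eval l C q1 a" "eval r C q2 a"
    by auto
  have nTDD: "is_nTDD T C" using TDD unfolding is_TDD_def by blast
  have children: "p1 \<in> tnodes C l" "p2 \<in> tnodes C r" "q1 \<in> tnodes C l" "q2 \<in> tnodes C r"
    using p(1) q(1) Node.prems(2,3) nTDD_inp_Node[OF nTDD] by (auto simp: tnodes_def)
  have "l \<in> subtrees T" "r \<in> subtrees T"
    using subtrees_trans[OF Node.prems(1)] by auto
  with Node.IH children p q have "p1 = q1" "p2 = q2" by blast+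
  moreover have "g1 \<noteq> g2 \<longrightarrow> inp C g1 \<inter> inp C g2 = {}"
    using TDD Node.prems unfolding is_TDD_def by blast
  ultimately show ?case using p q by auto
qed

text \<open>Every other t-node rejects both \<open>\<tau>\<close> and \<open>\<tau>'\<close> by \<open>TDD_eval_unique\<close>, so no node above \<open>t\<close>
  can tell them apart.\<close>
lemma TDD_subfun_eq:
  assumes TDD: "is_TDD T C" and T: "vtree_over T X" and comp: "computes T C f X"
    and t: "t \<in> subtrees T" and g: "g \<in> tnodes C t"
    and acc: "eval t C g \<tau>" "eval t C g \<tau>'"
  shows "subfun f X (vars t) \<tau> = subfun f X (vars t) \<tau>'"
proof
  fix \<sigma>
  let ?Y = "vars t"
  have nTDD: "is_nTDD T C" using TDD unfolding is_TDD_def by blast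
  have YX: "?Y \<subseteq> X" using vars_subtree[OF t] T unfolding vtree_over_def by blast
  have merge_local: "eval t C g' (merge ?Y \<sigma> \<rho>) = eval t C g' \<rho>" for g' \<rho>
    by (rule eval_cong) (simp add: merge_def)
  have same_tnodes: "eval t C g' (merge ?Y \<sigma> \<tau>) = eval t C g' (merge ?Y \<sigma> \<tau>')"
    if "g' \<in> tnodes C t" for g'
    using that TDD_eval_unique[OF TDD t that g] acc by (auto simp: merge_local)
  show "subfun f X ?Y \<tau> \<sigma> = subfun f X ?Y \<tau>' \<sigma>"
  proof (cases "\<sigma> \<in> asg (X - ?Y)")
    case True
    have "eval T C (out C) (merge ?Y \<sigma> \<tau>) = eval T C (out C) (merge ?Y \<sigma> \<tau>')"
      using eval_cong_subtree[OF nTDD _ same_tnodes] nTDD T t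
      by (auto simp: merge_def is_nTDD_def vtree_over_def)
    with True comp merge_in_asg[OF YX] show ?thesis
      unfolding subfun_def computes_def by auto
  qed (simp add: subfun_def)
qed

lemma computes_tnode_accepts:
  assumes nTDD: "is_nTDD T C" and T: "vtree_over T X" and comp: "computes T C f X"
    and t: "t \<in> subtrees T" and \<sigma>: "\<sigma> \<in> asg (X - vars t)" and f: "f (merge (vars t) \<sigma> \<tau>)"
  shows "\<exists>g\<in>tnodes C t. eval t C g \<tau>"
proof -
  have "vars t \<subseteq> X" using vars_subtree[OF t] T unfolding vtree_over_def by blast
  with f comp merge_in_asg[OF _ \<sigma>] have "eval T C (out C) (merge (vars t) \<sigma> \<tau>)"
    unfolding computes_def by auto
  moreover have "out C \<in> nodes C" "tnode C (out C) = T" using nTDD unfolding is_nTDD_def by auto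
  ultimately obtain g where "g \<in> tnodes C t" "eval t C g (merge (vars t) \<sigma> \<tau>)"
    using eval_reaches_subtree[OF nTDD _ _ t] by blast
  moreover have "eval t C g (merge (vars t) \<sigma> \<tau>) = eval t C g \<tau>"
    by (rule eval_cong) (simp add: merge_def)
  ultimately show ?thesis by blast
qed

lemma S_t_le_tdd_size:
  assumes TDD: "is_TDD T C" and T: "vtree_over T X" and comp: "computes T C f X"
    and t: "t \<in> subtrees T" "t = Node t1 t2"
  shows "S_t f X t \<le> tdd_size C"
proof -
  let ?Y = "vars t"
  define A where "A g = subfun f X ?Y ` {\<tau> \<in> asg ?Y. eval t C g \<tau>}" for g
  have nTDD: "is_nTDD T C" using TDD unfolding is_TDD_def by blast
  have finite_nodes: "finite (nodes C)" using nTDD unfolding is_nTDD_def by blast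
  then have finite_tnodes: "finite (tnodes C t)" by (simp add: tnodes_def)
  have covered: "nontrivial_subfuns f X ?Y \<subseteq> (\<Union>g\<in>tnodes C t. A g)"
  proof
    fix \<phi> assume "\<phi> \<in> nontrivial_subfuns f X ?Y"
    then obtain \<tau> \<sigma> where \<phi>: "\<phi> = subfun f X ?Y \<tau>" and \<tau>: "\<tau> \<in> asg ?Y"
      and \<sigma>: "\<sigma> \<in> asg (X - ?Y)" and f: "f (merge ?Y \<sigma> \<tau>)"
      unfolding nontrivial_subfuns_def by auto
    with computes_tnode_accepts[OF nTDD T comp t(1)] obtain g where "g \<in> tnodes C t" "eval t C g \<tau>"
      by blast
    with \<phi> \<tau> show "\<phi> \<in> (\<Union>g\<in>tnodes C t. A g)" unfolding A_def by blast
  qed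
  have A_le_inp: "card (A g) \<le> card (inp C g)" if g: "g \<in> tnodes C t" for g
  proof (cases "A g = {}")
    case False
    then obtain \<tau> where "eval t C g \<tau>" unfolding A_def by blast
    with t(2) have "inp C g \<noteq> {}" by auto
    moreover have "finite (inp C g)" using nTDD_finite_inp[OF nTDD] g by (simp add: tnodes_def)
    moreover have "finite (A g)" unfolding A_def by (simp add: finite_asg)
    moreover have "\<forall>\<phi>\<in>A g. \<forall>\<psi>\<in>A g. \<phi> = \<psi>"
      unfolding A_def using TDD_subfun_eq[OF TDD T comp t(1) g] by blast
    ultimately show ?thesis
      using card_le_Suc0_iff_eq[of "A g"] card_gt_0_iff[of "inp C g"] by linarith
  qed simp
  have "S_t f X t \<le> card (\<Union>g\<in>tnodes C t. A g)"
    unfolding S_t_def using covered finite_tnodes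
    by (intro card_mono) (auto simp: A_def finite_asg)
  also have "\<dots> \<le> (\<Sum>g\<in>tnodes C t. card (A g))"
    by (rule card_UN_le[OF finite_tnodes])
  also have "\<dots> \<le> (\<Sum>g\<in>tnodes C t. card (inp C g))"
    by (rule sum_mono) (rule A_le_inp)
  also have "\<dots> \<le> tdd_size C"
    unfolding tdd_size_def using finite_nodes by (intro sum_mono2) (auto simp: tnodes_def)
  finally show ?thesis .
qed

lemma S_t_le_fw_T: "t \<in> subtrees T \<Longrightarrow> S_t f X t \<le> fw_T f X T"
  unfolding fw_T_def by (intro Max_ge) (auto simp: finite_subtrees)

lemma fw_lower_bound:
  assumes "finite X" "X \<noteq> {}"
    and "\<And>T. vtree_over T X \<Longrightarrow> \<exists>t\<in>subtrees T. k \<le> S_t f X t"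
  shows "k \<le> fw f X"
  unfolding fw_def
proof (rule cINF_greatest)
  show "{T. vtree_over T X} \<noteq> {}" using vtree_over_exists[OF assms(1,2)] by blast
  show "k \<le> fw_T f X T" if "T \<in> {T. vtree_over T X}" for T
    using assms(3) that S_t_le_fw_T order_trans by blast
qed

lemma card_le_nontrivial_subfuns:
  assumes "finite Y"
    and F: "\<forall>r\<in>F. r \<noteq> {} \<and> r \<subseteq> R" "\<forall>r\<in>F. \<tau> r \<in> asg Y"
    and probe: "\<And>p. p \<in> R \<Longrightarrow> \<exists>\<sigma>\<in>asg (X - Y). \<forall>r\<in>F. f (merge Y \<sigma> (\<tau> r)) = (p \<in> r)"
  shows "card F \<le> card (nontrivial_subfuns f X Y)"
proof -
  define \<Phi> where "\<Phi> r = subfun f X Y (\<tau> r)" for r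
  have "\<Phi> ` F \<subseteq> nontrivial_subfuns f X Y"
  proof
    fix \<phi> assume "\<phi> \<in> \<Phi> ` F"
    then obtain r where r: "r \<in> F" "\<phi> = \<Phi> r" by blast
    with F obtain p where "p \<in> r" "p \<in> R" by blast
    with r probe obtain \<sigma> where "\<sigma> \<in> asg (X - Y)" "f (merge Y \<sigma> (\<tau> r))" by blast
    with r F show "\<phi> \<in> nontrivial_subfuns f X Y"
      unfolding nontrivial_subfuns_def \<Phi>_def by blast
  qed
  moreover have "inj_on \<Phi> F"
  proof
    fix r r' assume r: "r \<in> F" "r' \<in> F" and eq: "\<Phi> r = \<Phi> r'"
    show "r = r'"
    proof (rule ccontr)
      assume "r \<noteq> r'"
      then obtain p where p: "p \<in> r \<longleftrightarrow> p \<notin> r'" by blast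
      with r F have "p \<in> R" by blast
      with probe obtain \<sigma> where \<sigma>: "\<sigma> \<in> asg (X - Y)" "\<forall>r\<in>F. f (merge Y \<sigma> (\<tau> r)) = (p \<in> r)"
        by blast
      have "\<Phi> r \<sigma> = (p \<in> r)" "\<Phi> r' \<sigma> = (p \<in> r')"
        using \<sigma> r unfolding \<Phi>_def subfun_def by auto
      with eq p show False by simp
    qed
  qed
  ultimately show ?thesis
    using finite_nontrivial_subfuns[OF \<open>finite Y\<close>] by (metis card_image card_mono)
qed

lemma HWB_indicator:
  assumes "A \<subseteq> {1..n}" "card A = p" "0 < p"
  shows "HWB n (\<lambda>v. v \<in> A) = (p \<in> A)"
proof -
  have "{i \<in> {1..n}. i \<in> A} = A" using assms(1) by blast
  with assms(2,3) show ?thesis by (simp add: HWB_def)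
qed

lemma HWB_merge_indicator:
  assumes Y: "Y \<subseteq> {1..n}" and U: "U \<subseteq> Y" and Z: "Z \<subseteq> {1..n} - Y"
    and p: "card U + card Z = p" "0 < p" "p \<in> Y"
  shows "HWB n (merge Y (\<lambda>v. v \<in> Z) (\<lambda>v. v \<in> U)) = (p \<in> U)"
proof -
  have merge: "merge Y (\<lambda>v. v \<in> Z) (\<lambda>v. v \<in> U) = (\<lambda>v. v \<in> U \<union> Z)"
    using U Z by (auto simp: merge_def)
  have "finite U" "finite Z" using Y U Z by (auto intro: finite_subset)
  moreover have "U \<inter> Z = {}" using U Z by blast
  ultimately have "card (U \<union> Z) = p" using p(1) by (simp add: card_Un_disjoint)
  with Y U Z p(2) have "HWB n (\<lambda>v. v \<in> U \<union> Z) = (p \<in> U \<union> Z)"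
    by (intro HWB_indicator) auto
  with Z p(3) merge show ?thesis by auto
qed

text \<open>Windows of length \<open>n - card Y\<close> starting at \<open>d\<close> and at \<open>card Y - d\<close>: if both
  contained fewer than \<open>2 * d\<close> points of \<open>Y\<close>, the gaps around them would be too
  short to hold the rest of \<open>Y\<close>.\<close>
lemma dense_window_exists:
  fixes Y :: "nat set"
  assumes Y: "Y \<subseteq> {1..n}" and d: "1 \<le> d" "6 * d \<le> card Y + 2" "card Y + 4 * d \<le> n + 3"
  shows "\<exists>k. d \<le> k \<and> k + d \<le> card Y \<and> 2 * d \<le> card (Y \<inter> {k..k + (n - card Y)})"
proof (rule ccontr)
  assume sparse: "\<not> ?thesis"
  define m where "m = card Y"
  define L where "L = n - m"
  have "finite Y" using Y by (rule finite_subset) simp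
  have "m \<le> n" using card_mono[OF _ Y] unfolding m_def by simp
  have "2 * d \<le> m" using d unfolding m_def by linarith
  have "\<not> (d \<le> j \<and> j + d \<le> m \<and> 2 * d \<le> card (Y \<inter> {j..j + L}))" for j
    using sparse unfolding m_def L_def by blast
  from this[of d] this[of "m - d"] \<open>2 * d \<le> m\<close>
  have W1: "card (Y \<inter> {d..d + L}) < 2 * d" and W2: "card (Y \<inter> {m - d..m - d + L}) < 2 * d"
    by linarith+
  have "Y \<subseteq> {1..<d} \<union> (Y \<inter> {d..d + L}) \<union> {d + L + 1..<m - d}
      \<union> (Y \<inter> {m - d..m - d + L}) \<union> {m - d + L + 1..n}"
    using Y by auto
  then have "m \<le> card ({1..<d} \<union> (Y \<inter> {d..d + L}) \<union> {d + L + 1..<m - d}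
      \<union> (Y \<inter> {m - d..m - d + L}) \<union> {m - d + L + 1..n})"
    unfolding m_def by (intro card_mono) auto
  also have "\<dots> \<le> card {1..<d} + card (Y \<inter> {d..d + L}) + card {d + L + 1..<m - d}
      + card (Y \<inter> {m - d..m - d + L}) + card {m - d + L + 1..n}"
    by (smt (verit) add_le_mono card_Un_le le_trans order_refl)
  finally have "m \<le> (d - 1) + card (Y \<inter> {d..d + L}) + (m - d - (d + L + 1))
      + card (Y \<inter> {m - d..m - d + L}) + (n + 1 - (m - d + L + 1))"
    by simp
  with W1 W2 d \<open>m \<le> n\<close> \<open>2 * d \<le> m\<close> show False unfolding m_def L_def by linarith
qed

lemma HWB_probe:
  assumes Y: "Y \<subseteq> {1..n}" and p: "p \<in> Y" "0 < p" "k \<le> p" "p \<le> k + (n - card Y)"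
  shows "\<exists>\<sigma>\<in>asg ({1..n} - Y). \<forall>U. U \<subseteq> Y \<longrightarrow> card U = k \<longrightarrow>
           HWB n (merge Y \<sigma> (\<lambda>v. v \<in> U)) = (p \<in> U)"
proof -
  have "finite Y" using Y by (rule finite_subset) simp
  with Y have "p - k \<le> card ({1..n} - Y)" using p(3,4) by (simp add: card_Diff_subset)
  then obtain Z where Z: "Z \<subseteq> {1..n} - Y" "card Z = p - k"
    by (rule obtain_subset_with_card_n)
  have "(\<lambda>v. v \<in> Z) \<in> asg ({1..n} - Y)" using Z(1) by (auto simp: asg_def)
  moreover have "HWB n (merge Y (\<lambda>v. v \<in> Z) (\<lambda>v. v \<in> U)) = (p \<in> U)"
    if "U \<subseteq> Y" "card U = k" for U
    using HWB_merge_indicator[OF Y that(1) Z(1)] that(2) Z(2) p by simp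
  ultimately show ?thesis by blast
qed

lemma HWB_many_subfuns:
  fixes Y :: "nat set"
  assumes Y: "Y \<subseteq> {1..n}" and d: "1 \<le> d" "6 * d \<le> card Y + 2" "card Y + 4 * d \<le> n + 3"
  shows "2 ^ d \<le> card (nontrivial_subfuns (HWB n) {1..n} Y)"
proof -
  define X where "X = {1..n}"
  have "finite Y" using Y by (rule finite_subset) simp
  obtain k where k: "d \<le> k" "k + d \<le> card Y" "2 * d \<le> card (Y \<inter> {k..k + (n - card Y)})"
    using dense_window_exists[OF Y d] by blast
  obtain R where R: "R \<subseteq> Y \<inter> {k..k + (n - card Y)}" "card R = 2 * d"
    using k(3) by (rule obtain_subset_with_card_n)
  then have "finite R" using d by (intro card_ge_0_finite) simp
  have "card (Y - R) = card Y - card R" using R(1) \<open>finite R\<close> by (intro card_Diff_subset) auto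
  then have "k - d \<le> card (Y - R)" using k R(2) by linarith
  then obtain B where B: "B \<subseteq> Y - R" "card B = k - d"
    by (rule obtain_subset_with_card_n)
  define F where "F = {r. r \<subseteq> R \<and> card r = d}"
  have U: "B \<union> r \<subseteq> Y" "card (B \<union> r) = k" if "r \<in> F" for r
  proof -
    have "finite B" "finite r" "B \<inter> r = {}"
      using B that R(1) \<open>finite Y\<close> \<open>finite R\<close> unfolding F_def by (auto intro: finite_subset)
    then show "card (B \<union> r) = k" using B(2) that k(1) unfolding F_def by (simp add: card_Un_disjoint)
    show "B \<union> r \<subseteq> Y" using B that R unfolding F_def by auto
  qed
  have probe: "\<exists>\<sigma>\<in>asg (X - Y). \<forall>r\<in>F. HWB n (merge Y \<sigma> (\<lambda>v. v \<in> B \<union> r)) = (p \<in> r)"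
    if p: "p \<in> R" for p
  proof -
    have "p \<in> Y" "p \<notin> B" "0 < p" "k \<le> p" "p \<le> k + (n - card Y)" using p R B k d by auto
    then obtain \<sigma> where \<sigma>: "\<sigma> \<in> asg (X - Y)"
      "\<And>U. U \<subseteq> Y \<Longrightarrow> card U = k \<Longrightarrow> HWB n (merge Y \<sigma> (\<lambda>v. v \<in> U)) = (p \<in> U)"
      using HWB_probe[OF Y] unfolding X_def by blast
    have "HWB n (merge Y \<sigma> (\<lambda>v. v \<in> B \<union> r)) = (p \<in> r)" if "r \<in> F" for r
      using \<sigma>(2)[OF U[OF that]] \<open>p \<notin> B\<close> by simp
    with \<sigma>(1) show ?thesis by blast
  qed
  have "card F \<le> card (nontrivial_subfuns (HWB n) X Y)"
  proof (rule card_le_nontrivial_subfuns[OF \<open>finite Y\<close> _ _ probe])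
    show "\<forall>r\<in>F. r \<noteq> {} \<and> r \<subseteq> R" using d unfolding F_def by auto
    show "\<forall>r\<in>F. (\<lambda>v. v \<in> B \<union> r) \<in> asg Y" using U unfolding asg_def by blast
  qed
  moreover have "card F = (2 * d) choose d"
    unfolding F_def using n_subsets[OF \<open>finite R\<close>] R(2) by simp
  moreover have "real (2 ^ d) \<le> real ((2 * d) choose d)"
    using binomial_ge_n_over_k_pow_k[of d "2 * d", where 'a = real] d by simp
  ultimately show ?thesis unfolding X_def by linarith
qed

lemma HWB_wide_node:
  assumes T: "vtree_over T {1..n}" and n: "7 \<le> n"
  shows "\<exists>t\<in>subtrees T. (\<exists>t1 t2. t = Node t1 t2) \<and> 2 ^ ((n + 9) div 16) \<le> S_t (HWB n) {1..n} t"
proof -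
  define d where "d = (n + 9) div 16"
  have d: "1 \<le> d" "16 * d \<le> n + 9" "6 * d \<le> n + 2"
    using n unfolding d_def by linarith+
  have "card (vars T) = n" "distinct_leaves T" using T unfolding vtree_over_def by auto
  moreover have "2 \<le> 6 * d - 2" "6 * d - 2 \<le> n" using d by linarith+
  ultimately obtain s where s: "s \<in> subtrees T" "6 * d - 2 \<le> card (vars s)"
      "card (vars s) + 2 \<le> 2 * (6 * d - 2)"
    using subtree_card_between[of T "6 * d - 2"] by auto
  have Y: "vars s \<subseteq> {1..n}" using vars_subtree[OF s(1)] T unfolding vtree_over_def by blast
  have "2 ^ d \<le> S_t (HWB n) {1..n} s"
    unfolding S_t_def using s d by (intro HWB_many_subfuns[OF Y]) linarith+
  moreover have "\<exists>t1 t2. s = Node t1 t2"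
    using s(2) d(1) by (cases s) auto
  ultimately show ?thesis using s(1) unfolding d_def by blast
qed

text \<open>Where \<open>1 / 112\<close> comes from: \<open>(n - 6) / 16 \<le> (n + 9) div 16\<close>, and
  \<open>n / 112 \<le> (n - 6) / 16\<close> holds exactly when \<open>n \<ge> 7\<close>.\<close>
lemma two_powr_le_HWB_bound:
  assumes "7 \<le> n"
  shows "2 powr (1 / 112 * real n) \<le> 2 ^ ((n + 9) div 16)"
proof -
  have "n + 9 < 16 * ((n + 9) div 16) + 16" by simp
  then have "1 / 112 * real n \<le> real ((n + 9) div 16)" using assms by linarith
  then have "2 powr (1 / 112 * real n) \<le> 2 powr real ((n + 9) div 16)"
    by (rule powr_mono) simp
  then show ?thesis by (simp add: powr_realpow)
qed

theorem theorem19: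
  shows "\<exists>c::real. c > 0 \<and>
    (\<forall>n::nat. 0 < n \<and> 7 dvd n \<longrightarrow>
       2 powr (c * real n) \<le> real (fw (HWB n) {1..n}) \<and>
       (\<forall>(T :: nat vtree) (C :: (nat, nat) ntdd).
          vtree_over T {1..n} \<longrightarrow> is_TDD T C \<longrightarrow> computes T C (HWB n) {1..n} \<longrightarrow>
          2 powr (c * real n) \<le> real (tdd_size C)))"
proof (intro exI[of _ "1 / 112"] conjI allI impI)
  fix n :: nat
  assume "0 < n \<and> 7 dvd n"
  then have n: "7 \<le> n" by (auto elim: dvdE)
  let ?bound = "2 ^ ((n + 9) div 16) :: nat"
  have "?bound \<le> fw (HWB n) {1..n}"
    using HWB_wide_node[OF _ n] n by (intro fw_lower_bound) auto
  then show "2 powr (1 / 112 * real n) \<le> real (fw (HWB n) {1..n})"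
    using two_powr_le_HWB_bound[OF n] by (simp add: order_trans)
  fix T :: "nat vtree" and C :: "(nat, nat) ntdd"
  assume T: "vtree_over T {1..n}" and TDD: "is_TDD T C" and comp: "computes T C (HWB n) {1..n}"
  obtain t t1 t2 where t: "t \<in> subtrees T" "t = Node t1 t2" "?bound \<le> S_t (HWB n) {1..n} t"
    using HWB_wide_node[OF T n] by blast
  with S_t_le_tdd_size[OF TDD T comp] have "?bound \<le> tdd_size C"
    using order_trans by blast
  then show "2 powr (1 / 112 * real n) \<le> real (tdd_size C)"
    using two_powr_le_HWB_bound[OF n] by (simp add: order_trans)
qed simp

end
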